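(* Let $f\colon\mathbb R^d\to\mathbb R$ be bounded from below with $\underline f=\inf f$, let $\lambda,\sigma,\alpha>0$, and let $(\rho_t)_{t\ge0}$ be a solution of the Fokker–Planck equation, regular enough that the weak formulation may be tested against $x\mapsto x$ and $x\mapsto|x|^2$. Then \[ \frac{d}{dt}V(\rho_t)=-2\lambda V(\rho_t)+\frac{d\sigma^2}{2}\int|x-m_f[\rho_t]|^2d\rho_t\le-\Big(2\lambda-\frac{d\sigma^2e^{-\alpha\underline f}}{\|\omega_f^\alpha\|_{L^1(\rho_t)}}\Big)V(\rho_t). \]
   Context: $\omega_f^\alpha(x)=e^{-\alpha f(x)}$; for a probability measure $\mu$, $\|\omega_f^\alpha\|_{L^1(\mu)}=\int e^{-\alpha f}d\mu$ and $m_f[\mu]=\frac{1}{\|\omega_f^\alpha\|_{L^1(\mu)}}\int x\,\omega_f^\alpha d\mu$. $E(\mu)=\int x\,d\mu$ and $V(\mu)=\frac12\int|x-E(\mu)|^2d\mu$. The Fokker–Planck equation (weak form): for test functions $\varphi$, $\frac{d}{dt}\int\varphi\,d\rho_t=\int\big(\tfrac{\sigma^2}{2}|x-m_f[\rho_t]|^2\Delta\varphi-\lambda(x-m_f[\rho_t])\cdot\nabla\varphi\big)d\rho_t$. *)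

theory Defs
  imports "HOL-Probability.Probability"
begin

definition cbo_weight :: "real \<Rightarrow> ('a \<Rightarrow> real) \<Rightarrow> 'a \<Rightarrow> real" where
  "cbo_weight \<alpha> f x = exp (- \<alpha> * f x)"

definition cbo_wnorm :: "real \<Rightarrow> ('a \<Rightarrow> real) \<Rightarrow> 'a measure \<Rightarrow> real" where
  "cbo_wnorm \<alpha> f \<mu> = integral\<^sup>L \<mu> (cbo_weight \<alpha> f)"

definition cbo_m :: "real \<Rightarrow> ('a::euclidean_space \<Rightarrow> real) \<Rightarrow> 'a measure \<Rightarrow> 'a" where
  "cbo_m \<alpha> f \<mu> = (1 / cbo_wnorm \<alpha> f \<mu>) *\<^sub>R integral\<^sup>L \<mu> (\<lambda>x. cbo_weight \<alpha> f x *\<^sub>R x)"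

definition cbo_E :: "'a::euclidean_space measure \<Rightarrow> 'a" where
  "cbo_E \<mu> = integral\<^sup>L \<mu> (\<lambda>x. x)"

definition cbo_V :: "'a::euclidean_space measure \<Rightarrow> real" where
  "cbo_V \<mu> = 1/2 * integral\<^sup>L \<mu> (\<lambda>x. (norm (x - cbo_E \<mu>))\<^sup>2)"

end

theory Submission
  imports Defs
begin

(*
  Along the moment equations V = (int |x|^2 - |E|^2) / 2 has derivative
  -2 lam V + (d sigma^2 / 2) int |x - m|^2.  For the inequality write int |x - m|^2 = 2 V + |m - E|^2.
  The consensus point m is the mean for the weight w = exp (-alpha f), so with W = int w the
  deviation m - E is a covariance: W (m - E) . v = int (w - W) ((x - E) . v).  Cauchy-Schwarz and
  int (w - W)^2 <= (K - W) W for 0 < w <= K = exp (-alpha inf f) give W |m - E|^2 <= (K - W) 2 V,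
  hence int |x - m|^2 <= (K / W) 2 V.
*)

lemma integral_mult_square_le:
  fixes g h :: "'a \<Rightarrow> real"
  assumes g: "g \<in> borel_measurable M" and h: "h \<in> borel_measurable M"
    and ig: "integrable M (\<lambda>x. (g x)\<^sup>2)" and ih: "integrable M (\<lambda>x. (h x)\<^sup>2)"
  shows "(LINT x|M. g x * h x)\<^sup>2 \<le> (LINT x|M. (g x)\<^sup>2) * (LINT x|M. (h x)\<^sup>2)"
proof -
  define A where "A = (LINT x|M. (g x)\<^sup>2)"
  define B where "B = (LINT x|M. g x * h x)"
  define C where "C = (LINT x|M. (h x)\<^sup>2)"
  have igh: "integrable M (\<lambda>x. g x * h x)"
  proof (rule Bochner_Integration.integrable_bound)
    show "integrable M (\<lambda>x. (g x)\<^sup>2 + (h x)\<^sup>2)" using ig ih by simp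
    show "AE x in M. norm (g x * h x) \<le> norm ((g x)\<^sup>2 + (h x)\<^sup>2)"
    proof (intro AE_I2)
      fix x
      have "2 * (\<bar>g x\<bar> * \<bar>h x\<bar>) \<le> (g x)\<^sup>2 + (h x)\<^sup>2"
        using sum_squares_bound[of "\<bar>g x\<bar>" "\<bar>h x\<bar>"] by simp
      moreover have "0 \<le> \<bar>g x\<bar> * \<bar>h x\<bar>" by simp
      ultimately have "\<bar>g x\<bar> * \<bar>h x\<bar> \<le> (g x)\<^sup>2 + (h x)\<^sup>2" by linarith
      then show "norm (g x * h x) \<le> norm ((g x)\<^sup>2 + (h x)\<^sup>2)" by (simp add: abs_mult)
    qed
  qed (use g h in measurable)
  have quadratic: "0 \<le> A - 2 * u * B + u\<^sup>2 * C" for u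
  proof -
    have "0 \<le> (LINT x|M. (g x - u * h x)\<^sup>2)" by simp
    also have "\<dots> = (LINT x|M. (g x)\<^sup>2 - 2 * u * (g x * h x) + u\<^sup>2 * (h x)\<^sup>2)"
      by (simp add: power2_diff power_mult_distrib algebra_simps)
    also have "\<dots> = A - 2 * u * B + u\<^sup>2 * C"
      using ig ih igh unfolding A_def B_def C_def by simp
    finally show ?thesis .
  qed
  have "B\<^sup>2 \<le> A * C"
  proof (cases "C = 0")
    case True
    have "B = 0"
    proof (rule ccontr)
      assume "B \<noteq> 0"
      then have "2 * ((A + 1) / (2 * B)) * B = A + 1" by simp
      then show False using quadratic[of "(A + 1) / (2 * B)"] True by simp
    qed
    then show ?thesis using True by simp
  next
    case False
    have "0 \<le> C" unfolding C_def by simp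
    then have C_pos: "0 < C" using False by simp
    have "0 \<le> (A - 2 * (B / C) * B + (B / C)\<^sup>2 * C) * C"
      using quadratic[of "B / C"] C_pos by simp
    also have "\<dots> = A * C - B\<^sup>2" using C_pos by (simp add: field_simps power2_eq_square)
    finally show ?thesis by simp
  qed
  then show ?thesis unfolding A_def B_def C_def .
qed

lemma (in prob_space) integral_sq_deviation_le:
  fixes w :: "'a \<Rightarrow> real"
  assumes iw: "integrable M w" and w_bounds: "\<And>x. 0 \<le> w x \<and> w x \<le> K"
  shows "(LINT x|M. (w x - expectation w)\<^sup>2) \<le> (K - expectation w) * expectation w"
proof -
  let ?W = "expectation w"
  have "(LINT x|M. (w x - ?W)\<^sup>2) \<le> (LINT x|M. K * w x - 2 * ?W * w x + ?W\<^sup>2)"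
  proof (rule integral_mono')
    show "integrable M (\<lambda>x. K * w x - 2 * ?W * w x + ?W\<^sup>2)" using iw by simp
    fix x
    have "w x * w x \<le> K * w x" using w_bounds[of x] by (simp add: mult_right_mono)
    then show upper: "(w x - ?W)\<^sup>2 \<le> K * w x - 2 * ?W * w x + ?W\<^sup>2"
      by (simp add: power2_eq_square algebra_simps)
    show "0 \<le> K * w x - 2 * ?W * w x + ?W\<^sup>2"
      using upper zero_le_power2[of "w x - ?W"] by linarith
  qed
  also have "\<dots> = (K - ?W) * ?W" using iw by (simp add: prob_space power2_eq_square algebra_simps)
  finally show ?thesis .
qed

lemma norm_le_one_plus_norm_sq: "norm x \<le> 1 + (norm x)\<^sup>2"
proof (cases "norm x \<le> 1")
  case True
  then show ?thesis by (simp add: add_increasing2)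
next
  case False
  then have "norm x \<le> (norm x)\<^sup>2" by (simp add: power2_eq_square mult_le_cancel_left1)
  then show ?thesis by simp
qed

lemma power2_inner_le: "(u \<bullet> v)\<^sup>2 \<le> (norm v)\<^sup>2 * (norm u)\<^sup>2"
  using Cauchy_Schwarz_ineq[of u v] by (simp add: power2_norm_eq_inner mult.commute)

lemma cbo_V_nonneg: "0 \<le> cbo_V M"
  unfolding cbo_V_def by simp

definition weighted_mean :: "'a measure \<Rightarrow> ('a \<Rightarrow> real) \<Rightarrow> 'a::{banach, second_countable_topology}" where
  "weighted_mean M w = (1 / integral\<^sup>L M w) *\<^sub>R integral\<^sup>L M (\<lambda>x. w x *\<^sub>R x)"

lemma cbo_m_eq_weighted_mean: "cbo_m \<alpha> f \<mu> = weighted_mean \<mu> (cbo_weight \<alpha> f)"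
  unfolding cbo_m_def cbo_wnorm_def weighted_mean_def ..

locale finite_second_moment = prob_space M for M :: "'a::euclidean_space measure" +
  assumes sets_eq_borel: "sets M = sets borel"
    and integrable_norm_sq: "integrable M (\<lambda>x. (norm x)\<^sup>2)"
begin

lemma borel_measurable_of_borel:
  assumes "g \<in> borel_measurable borel"
  shows "g \<in> borel_measurable M"
  using assms by (subst measurable_cong_sets[OF sets_eq_borel refl])

lemma integrable_of_quadratic_growth:
  fixes g :: "'a \<Rightarrow> 'b::{banach, second_countable_topology}"
  assumes g: "g \<in> borel_measurable borel" and growth: "\<And>x. norm (g x) \<le> C * (1 + (norm x)\<^sup>2)"
  shows "integrable M g"
proof (rule Bochner_Integration.integrable_bound)
  show "integrable M (\<lambda>x. C * (1 + (norm x)\<^sup>2))" using integrable_norm_sq by simp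
  show "AE x in M. norm (g x) \<le> norm (C * (1 + (norm x)\<^sup>2))"
    by (intro AE_I2 order_trans[OF growth]) simp
qed (use borel_measurable_of_borel[OF g] in simp)

lemma integrable_ident [simp]: "integrable M (\<lambda>x. x)"
proof (rule integrable_of_quadratic_growth[where C = 1])
  show "norm x \<le> 1 * (1 + (norm x)\<^sup>2)" for x :: 'a
    using norm_le_one_plus_norm_sq[of x] by simp
qed simp

lemma integral_inner_ident [simp]: "(LINT x|M. x \<bullet> c) = cbo_E M \<bullet> c"
  unfolding cbo_E_def by simp

lemma integrable_sq_dist [simp]: "integrable M (\<lambda>x. (norm (x - c))\<^sup>2)"
proof (rule integrable_of_quadratic_growth[where C = "2 + 2 * (norm c)\<^sup>2"])
  fix x :: 'a
  have "(norm (x - c))\<^sup>2 \<le> (norm x + norm c)\<^sup>2"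
    by (simp add: norm_triangle_ineq4 power_mono)
  also have "\<dots> \<le> 2 * (norm x)\<^sup>2 + 2 * (norm c)\<^sup>2"
    using sum_squares_bound[of "norm x" "norm c"] by (simp add: power2_sum)
  also have "\<dots> \<le> (2 + 2 * (norm c)\<^sup>2) * (1 + (norm x)\<^sup>2)"
    by (simp add: algebra_simps)
  finally show "norm ((norm (x - c))\<^sup>2) \<le> (2 + 2 * (norm c)\<^sup>2) * (1 + (norm x)\<^sup>2)" by simp
qed simp

lemma integral_sq_dist: "(LINT x|M. (norm (x - c))\<^sup>2) = 2 * cbo_V M + (norm (cbo_E M - c))\<^sup>2"
proof -
  let ?E = "cbo_E M"
  have "(LINT x|M. (norm (x - c))\<^sup>2)
      = (LINT x|M. (norm (x - ?E))\<^sup>2 + 2 * (x \<bullet> (?E - c)) - 2 * (?E \<bullet> (?E - c)) + (norm (?E - c))\<^sup>2)"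
    by (rule Bochner_Integration.integral_cong)
       (auto simp: power2_norm_eq_inner algebra_simps inner_diff_left inner_diff_right inner_commute)
  also have "\<dots> = (LINT x|M. (norm (x - ?E))\<^sup>2) + (norm (?E - c))\<^sup>2"
    by (simp add: prob_space)
  finally show ?thesis unfolding cbo_V_def by simp
qed

lemma cbo_V_eq_moments: "cbo_V M = ((LINT x|M. (norm x)\<^sup>2) - (norm (cbo_E M))\<^sup>2) / 2"
  using integral_sq_dist[of 0] by simp

lemma integral_linear_drift: "(LINT x|M. - lam *\<^sub>R (x - c)) = - lam *\<^sub>R (cbo_E M - c)"
  unfolding cbo_E_def by (simp add: prob_space scaleR_diff_right)

lemma integral_second_moment_drift:
  "(LINT x|M. a * (norm (x - c))\<^sup>2 - lam * ((x - c) \<bullet> (2 *\<^sub>R x)))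
    = a * (LINT x|M. (norm (x - c))\<^sup>2) - 2 * lam * ((LINT x|M. (norm x)\<^sup>2) - cbo_E M \<bullet> c)"
proof -
  have "(LINT x|M. a * (norm (x - c))\<^sup>2 - lam * ((x - c) \<bullet> (2 *\<^sub>R x)))
      = (LINT x|M. a * (norm (x - c))\<^sup>2 - 2 * lam * (norm x)\<^sup>2 + 2 * lam * (x \<bullet> c))"
    by (rule Bochner_Integration.integral_cong)
       (auto simp: power2_norm_eq_inner algebra_simps inner_diff_left inner_commute)
  also have "\<dots> = a * (LINT x|M. (norm (x - c))\<^sup>2) - 2 * lam * ((LINT x|M. (norm x)\<^sup>2) - cbo_E M \<bullet> c)"
    using integrable_norm_sq by (simp add: algebra_simps)
  finally show ?thesis .
qed

lemma integrable_sq_inner_dist [simp]: "integrable M (\<lambda>x. ((x - c) \<bullet> v)\<^sup>2)"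
proof (rule Bochner_Integration.integrable_bound)
  show "integrable M (\<lambda>x. (norm v)\<^sup>2 * (norm (x - c))\<^sup>2)" by simp
  show "AE x in M. norm (((x - c) \<bullet> v)\<^sup>2) \<le> norm ((norm v)\<^sup>2 * (norm (x - c))\<^sup>2)"
    by (simp add: power2_inner_le)
qed (simp add: borel_measurable_of_borel)

lemma integral_sq_inner_deviation_le: "(LINT x|M. ((x - cbo_E M) \<bullet> v)\<^sup>2) \<le> (norm v)\<^sup>2 * (2 * cbo_V M)"
proof -
  have "(LINT x|M. ((x - cbo_E M) \<bullet> v)\<^sup>2) \<le> (LINT x|M. (norm v)\<^sup>2 * (norm (x - cbo_E M))\<^sup>2)"
    by (intro integral_mono') (simp_all add: power2_inner_le)
  also have "\<dots> = (norm v)\<^sup>2 * (2 * cbo_V M)"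
    using integral_sq_dist[of "cbo_E M"] by simp
  finally show ?thesis .
qed

context
  fixes w :: "'a \<Rightarrow> real" and K :: real
  assumes weight_measurable: "w \<in> borel_measurable borel"
    and weight_pos: "\<And>x. 0 < w x" and weight_le: "\<And>x. w x \<le> K"
begin

lemma integrable_weight [simp]: "integrable M w"
proof (rule integrable_of_quadratic_growth[OF weight_measurable, where C = K])
  fix x :: 'a
  have "0 \<le> K" using weight_pos[of x] weight_le[of x] by linarith
  then have "K \<le> K * (1 + (norm x)\<^sup>2)" by (simp add: mult_le_cancel_left1)
  moreover have "norm (w x) = w x" using weight_pos[of x] by simp
  ultimately show "norm (w x) \<le> K * (1 + (norm x)\<^sup>2)"
    using weight_le[of x] by linarith
qed

lemma integrable_weighted_ident [simp]: "integrable M (\<lambda>x. w x *\<^sub>R x)"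
proof (rule integrable_of_quadratic_growth[where C = K])
  show "(\<lambda>x. w x *\<^sub>R x) \<in> borel_measurable borel" using weight_measurable by measurable
  fix x :: 'a
  have "norm (w x *\<^sub>R x) = w x * norm x" using weight_pos[of x] by simp
  also have "\<dots> \<le> K * (1 + (norm x)\<^sup>2)"
    using weight_le[of x] weight_pos[of x] norm_le_one_plus_norm_sq[of x]
    by (intro mult_mono) auto
  finally show "norm (w x *\<^sub>R x) \<le> K * (1 + (norm x)\<^sup>2)" .
qed

lemma expectation_weight_pos: "0 < expectation w"
proof -
  have "expectation w \<noteq> 0"
  proof
    assume "expectation w = 0"
    then have "AE x in M. w x = 0"
      using integral_nonneg_eq_0_iff_AE[OF integrable_weight] weight_pos by (simp add: less_imp_le)
    then show False using weight_pos by (simp add: less_le)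
  qed
  moreover have "0 \<le> expectation w" using weight_pos by (simp add: less_imp_le)
  ultimately show ?thesis by simp
qed

lemma expectation_weight_le: "expectation w \<le> K"
proof -
  have "expectation w \<le> expectation (\<lambda>_. K)"
    by (rule integral_mono) (auto simp: weight_le)
  then show ?thesis by (simp add: prob_space)
qed

lemma integrable_sq_weight_deviation [simp]: "integrable M (\<lambda>x. (w x - c)\<^sup>2)"
proof -
  have "integrable M (\<lambda>x. (w x)\<^sup>2)"
  proof (rule Bochner_Integration.integrable_bound)
    show "integrable M (\<lambda>x. K * w x)" by simp
    show "AE x in M. norm ((w x)\<^sup>2) \<le> norm (K * w x)"
    proof (intro AE_I2)
      fix x
      have "0 < w x" "w x \<le> K" by (fact weight_pos weight_le)+
      then show "norm ((w x)\<^sup>2) \<le> norm (K * w x)"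
        by (simp add: power2_eq_square mult_right_mono)
    qed
  qed (use weight_measurable in \<open>simp add: borel_measurable_of_borel\<close>)
  then show ?thesis by (simp add: power2_diff)
qed

lemma integral_weight_covariance:
  "(LINT x|M. (w x - expectation w) * ((x - cbo_E M) \<bullet> u))
    = expectation w * ((weighted_mean M w - cbo_E M) \<bullet> u)"
proof -
  let ?W = "expectation w" and ?E = "cbo_E M"
  have mean: "?W *\<^sub>R weighted_mean M w = (LINT x|M. w x *\<^sub>R x)"
    using expectation_weight_pos unfolding weighted_mean_def by simp
  have "(LINT x|M. (w x - ?W) * ((x - ?E) \<bullet> u))
      = (LINT x|M. (w x *\<^sub>R x) \<bullet> u - (?E \<bullet> u) * w x - ?W * (x \<bullet> u) + ?W * (?E \<bullet> u))"
    by (rule Bochner_Integration.integral_cong) (auto simp: algebra_simps inner_diff_left)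
  also have "\<dots> = (LINT x|M. w x *\<^sub>R x) \<bullet> u - ?W * (?E \<bullet> u)"
    using integrable_inner_left[OF integrable_weighted_ident, of u]
      integral_inner_left[of u M "\<lambda>x. w x *\<^sub>R x"]
    by (simp add: prob_space)
  also have "\<dots> = ?W * ((weighted_mean M w - ?E) \<bullet> u)"
    by (simp flip: mean add: inner_diff_left algebra_simps)
  finally show ?thesis .
qed

lemma weighted_mean_deviation_le:
  "expectation w * (norm (weighted_mean M w - cbo_E M))\<^sup>2 \<le> (K - expectation w) * (2 * cbo_V M)"
proof -
  let ?W = "expectation w" and ?E = "cbo_E M"
  define v where "v = weighted_mean M w - ?E"
  define P where "P = 2 * cbo_V M"
  have "(?W * (norm v)\<^sup>2)\<^sup>2 = (LINT x|M. (w x - ?W) * ((x - ?E) \<bullet> v))\<^sup>2"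
    by (simp add: integral_weight_covariance v_def power2_norm_eq_inner)
  also have "\<dots> \<le> (LINT x|M. (w x - ?W)\<^sup>2) * (LINT x|M. ((x - ?E) \<bullet> v)\<^sup>2)"
    using weight_measurable
    by (intro integral_mult_square_le) (auto intro: borel_measurable_of_borel)
  also have "\<dots> \<le> ((K - ?W) * ?W) * ((norm v)\<^sup>2 * P)"
  proof (rule mult_mono)
    show "(LINT x|M. (w x - ?W)\<^sup>2) \<le> (K - ?W) * ?W"
      using weight_pos weight_le by (intro integral_sq_deviation_le) (auto simp: less_imp_le)
    show "(LINT x|M. ((x - ?E) \<bullet> v)\<^sup>2) \<le> (norm v)\<^sup>2 * P"
      unfolding P_def by (rule integral_sq_inner_deviation_le)
    show "0 \<le> (K - ?W) * ?W" using expectation_weight_le expectation_weight_pos by simp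
  qed simp
  finally have squared: "(?W * (norm v)\<^sup>2) * (?W * (norm v)\<^sup>2) \<le> (?W * (norm v)\<^sup>2) * ((K - ?W) * P)"
    by (simp add: power2_eq_square algebra_simps)
  show ?thesis
  proof (cases "v = 0")
    case True
    then show ?thesis
      using expectation_weight_le cbo_V_nonneg[of M] unfolding v_def P_def by simp
  next
    case False
    then have "0 < ?W * (norm v)\<^sup>2" using expectation_weight_pos by simp
    then have "?W * (norm v)\<^sup>2 \<le> (K - ?W) * P"
      using squared by (simp only: mult_le_cancel_left_pos)
    then show ?thesis unfolding v_def P_def .
  qed
qed

lemma weighted_mean_sq_dist_le:
  "(LINT x|M. (norm (x - weighted_mean M w))\<^sup>2) \<le> K / expectation w * (2 * cbo_V M)"
proof -
  let ?W = "expectation w"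
  have W_pos: "0 < ?W" by (rule expectation_weight_pos)
  have "(LINT x|M. (norm (x - weighted_mean M w))\<^sup>2)
      = 2 * cbo_V M + (norm (weighted_mean M w - cbo_E M))\<^sup>2"
    by (simp add: integral_sq_dist norm_minus_commute)
  also have "\<dots> \<le> 2 * cbo_V M + (K - ?W) / ?W * (2 * cbo_V M)"
    using weighted_mean_deviation_le W_pos by (simp add: field_simps)
  also have "\<dots> = K / ?W * (2 * cbo_V M)"
    using W_pos by (simp add: field_simps)
  finally show ?thesis .
qed

end

end

lemma cbo_V_has_real_derivative:
  fixes \<rho> :: "real \<Rightarrow> 'a::euclidean_space measure"
  assumes moments: "\<And>s. s \<in> T \<Longrightarrow> finite_second_moment (\<rho> s)" and t: "t \<in> T"
    and mean_deriv: "((\<lambda>s. cbo_E (\<rho> s)) has_vector_derivative E') (at t within T)"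
    and second_moment_deriv: "((\<lambda>s. LINT x|\<rho> s. (norm x)\<^sup>2) has_real_derivative S') (at t within T)"
  shows "((\<lambda>s. cbo_V (\<rho> s)) has_real_derivative (S' - 2 * (cbo_E (\<rho> t) \<bullet> E')) / 2) (at t within T)"
proof -
  have "((\<lambda>s. cbo_E (\<rho> s) \<bullet> cbo_E (\<rho> s)) has_derivative
      (\<lambda>h. cbo_E (\<rho> t) \<bullet> (h *\<^sub>R E') + (h *\<^sub>R E') \<bullet> cbo_E (\<rho> t))) (at t within T)"
    using mean_deriv unfolding has_vector_derivative_def by (intro has_derivative_inner)
  moreover have "(\<lambda>h. cbo_E (\<rho> t) \<bullet> (h *\<^sub>R E') + (h *\<^sub>R E') \<bullet> cbo_E (\<rho> t))
      = (*) (2 * (cbo_E (\<rho> t) \<bullet> E'))"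
    by (auto simp: inner_commute algebra_simps)
  ultimately have "((\<lambda>s. cbo_E (\<rho> s) \<bullet> cbo_E (\<rho> s)) has_real_derivative 2 * (cbo_E (\<rho> t) \<bullet> E'))
      (at t within T)"
    unfolding has_field_derivative_def by simp
  then have "((\<lambda>s. ((LINT x|\<rho> s. (norm x)\<^sup>2) - cbo_E (\<rho> s) \<bullet> cbo_E (\<rho> s)) / 2) has_real_derivative
      (S' - 2 * (cbo_E (\<rho> t) \<bullet> E')) / 2) (at t within T)"
    by (intro DERIV_cdivide DERIV_diff second_moment_deriv)
  then show ?thesis
    by (rule has_field_derivative_transform_within[OF _ zero_less_one t])
       (simp add: finite_second_moment.cbo_V_eq_moments[OF moments] power2_norm_eq_inner)
qed

lemma cbo_V_has_real_derivative_moment_equations: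
  fixes \<rho> :: "real \<Rightarrow> 'a::euclidean_space measure"
  assumes moments: "\<And>s. s \<in> T \<Longrightarrow> finite_second_moment (\<rho> s)" and t: "t \<in> T"
    and mean_deriv: "((\<lambda>s. cbo_E (\<rho> s)) has_vector_derivative
      (LINT x|\<rho> t. - lam *\<^sub>R (x - c))) (at t within T)"
    and second_moment_deriv: "((\<lambda>s. LINT x|\<rho> s. (norm x)\<^sup>2) has_real_derivative
      (LINT x|\<rho> t. a * (norm (x - c))\<^sup>2 - lam * ((x - c) \<bullet> (2 *\<^sub>R x)))) (at t within T)"
  shows "((\<lambda>s. cbo_V (\<rho> s)) has_real_derivative
      - 2 * lam * cbo_V (\<rho> t) + a / 2 * (LINT x|\<rho> t. (norm (x - c))\<^sup>2)) (at t within T)"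
proof -
  interpret finite_second_moment "\<rho> t" using moments t .
  show ?thesis
    using cbo_V_has_real_derivative[OF moments t mean_deriv[unfolded integral_linear_drift]
        second_moment_deriv[unfolded integral_second_moment_drift]]
    by (simp add: cbo_V_eq_moments power2_norm_eq_inner inner_diff_right field_simps)
qed

lemma borel_measurable_cbo_weight [measurable]:
  "f \<in> borel_measurable borel \<Longrightarrow> cbo_weight \<alpha> f \<in> borel_measurable borel"
  unfolding cbo_weight_def by measurable

lemma cbo_weight_pos: "0 < cbo_weight \<alpha> f x"
  unfolding cbo_weight_def by simp

lemma cbo_weight_le_exp_Inf:
  assumes "0 \<le> \<alpha>" and "bdd_below (range f)"
  shows "cbo_weight \<alpha> f x \<le> exp (- \<alpha> * (INF y. f y))"
proof -
  have "(INF y. f y) \<le> f x" using assms(2) by (rule cINF_lower) simp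
  then show ?thesis unfolding cbo_weight_def using assms(1) by (simp add: mult_left_mono)
qed

theorem mainTheorem8:
  fixes f :: "'a::euclidean_space \<Rightarrow> real"
    and \<rho> :: "real \<Rightarrow> 'a measure"
    and lam \<sigma> \<alpha> :: real
  assumes f_meas: "f \<in> borel_measurable borel"
    and f_bdd: "bdd_below (range f)"
    and lam_pos: "lam > 0" and sigma_pos: "\<sigma> > 0" and alpha_pos: "\<alpha> > 0"
    and prob: "\<And>t. t \<ge> 0 \<Longrightarrow> prob_space (\<rho> t) \<and> sets (\<rho> t) = sets borel"
    and moment2: "\<And>t. t \<ge> 0 \<Longrightarrow> integrable (\<rho> t) (\<lambda>x. (norm x)\<^sup>2)"
    and FP_x: "\<And>t. t \<ge> 0 \<Longrightarrow>
      ((\<lambda>s. integral\<^sup>L (\<rho> s) (\<lambda>x. x)) has_vector_derivative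
         integral\<^sup>L (\<rho> t) (\<lambda>x. - lam *\<^sub>R (x - cbo_m \<alpha> f (\<rho> t)))) (at t within {0..})"
    and FP_sq: "\<And>t. t \<ge> 0 \<Longrightarrow>
      ((\<lambda>s. integral\<^sup>L (\<rho> s) (\<lambda>x. (norm x)\<^sup>2)) has_real_derivative
         integral\<^sup>L (\<rho> t) (\<lambda>x. \<sigma>\<^sup>2 / 2 * (norm (x - cbo_m \<alpha> f (\<rho> t)))\<^sup>2 * (2 * real DIM('a))
                              - lam * ((x - cbo_m \<alpha> f (\<rho> t)) \<bullet> (2 *\<^sub>R x)))) (at t within {0..})"
  shows "\<And>t. t \<ge> 0 \<Longrightarrow>
      ((\<lambda>s. cbo_V (\<rho> s)) has_real_derivative
         (- 2 * lam * cbo_V (\<rho> t)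
          + real DIM('a) * \<sigma>\<^sup>2 / 2 * integral\<^sup>L (\<rho> t) (\<lambda>x. (norm (x - cbo_m \<alpha> f (\<rho> t)))\<^sup>2)))
        (at t within {0..})
      \<and> - 2 * lam * cbo_V (\<rho> t)
          + real DIM('a) * \<sigma>\<^sup>2 / 2 * integral\<^sup>L (\<rho> t) (\<lambda>x. (norm (x - cbo_m \<alpha> f (\<rho> t)))\<^sup>2)
        \<le> - (2 * lam - real DIM('a) * \<sigma>\<^sup>2 * exp (- \<alpha> * (INF x. f x)) / cbo_wnorm \<alpha> f (\<rho> t))
             * cbo_V (\<rho> t)"
proof -
  fix t :: real assume t: "t \<ge> 0"
  have moments: "finite_second_moment (\<rho> s)" if "s \<in> {0..}" for s
    using prob[of s] moment2[of s] that
    by (simp add: finite_second_moment_def finite_second_moment_axioms_def)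
  interpret finite_second_moment "\<rho> t" using moments t by simp
  let ?m = "cbo_m \<alpha> f (\<rho> t)" and ?V = "cbo_V (\<rho> t)" and ?W = "cbo_wnorm \<alpha> f (\<rho> t)"
  let ?Q = "LINT x|\<rho> t. (norm (x - ?m))\<^sup>2" and ?K = "exp (- \<alpha> * (INF x. f x))"
  have second_moment_deriv: "((\<lambda>s. LINT x|\<rho> s. (norm x)\<^sup>2) has_real_derivative
      (LINT x|\<rho> t. (\<sigma>\<^sup>2 * real DIM('a)) * (norm (x - ?m))\<^sup>2 - lam * ((x - ?m) \<bullet> (2 *\<^sub>R x))))
      (at t within {0..})"
    using FP_sq[OF t] by (simp add: ac_simps)
  have deriv: "((\<lambda>s. cbo_V (\<rho> s)) has_real_derivative
      - 2 * lam * ?V + real DIM('a) * \<sigma>\<^sup>2 / 2 * ?Q) (at t within {0..})"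
    using cbo_V_has_real_derivative_moment_equations[OF moments _
        FP_x[OF t, folded cbo_E_def] second_moment_deriv] t
    by (simp add: ac_simps)
  have "?Q \<le> ?K / ?W * (2 * ?V)"
    using weighted_mean_sq_dist_le[OF borel_measurable_cbo_weight[OF f_meas] cbo_weight_pos
        cbo_weight_le_exp_Inf[OF less_imp_le[OF alpha_pos] f_bdd]]
    by (simp add: cbo_m_eq_weighted_mean cbo_wnorm_def)
  then have "real DIM('a) * \<sigma>\<^sup>2 / 2 * ?Q \<le> real DIM('a) * \<sigma>\<^sup>2 / 2 * (?K / ?W * (2 * ?V))"
    by (rule mult_left_mono) simp
  also have "\<dots> = real DIM('a) * \<sigma>\<^sup>2 * ?K / ?W * ?V"
    by simp
  finally show "?thesis t" using deriv by (simp add: algebra_simps)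
qed

end
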